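(* Let $m$ be a positive integer and $I=\{m\}$. If $z_0\in\mathbb C$ satisfies $d(I;z_0)=0$, then $|z_0|\le m$ and $\mathrm{Re}(z_0)\ge -1$.
   Context: For a finite set $I$ of positive integers, $d(I;z)$ denotes the descent polynomial: the unique polynomial whose value at each integer $n>\max(I\cup\{0\})$ is the number of permutations $\pi\in\mathfrak S_n$ with $\{j\mid\pi_j>\pi_{j+1}\}=I$, evaluated at a complex number $z$. (For $I=\{m\}$ one has $d(I;z)=\binom{z}{m}-1$, with $\binom{z}{m}=z(z-1)\cdots(z-m+1)/m!$.) *)

theory Defs
  imports "HOL-Analysis.Analysis" "HOL-Computational_Algebra.Polynomial"
begin

definition descent_set :: "nat \<Rightarrow> (nat \<Rightarrow> nat) \<Rightarrow> nat set" where
  "descent_set n \<sigma> = {j. 1 \<le> j \<and> j < n \<and> \<sigma> j > \<sigma> (Suc j)}"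

definition descent_count :: "nat set \<Rightarrow> nat \<Rightarrow> nat" where
  "descent_count I n = card {\<sigma>. \<sigma> permutes {1..n} \<and> descent_set n \<sigma> = I}"

definition descent_poly :: "nat set \<Rightarrow> complex poly" where
  "descent_poly I = (THE p. \<forall>n::nat. n > Max (I \<union> {0}) \<longrightarrow>
                        poly p (of_nat n) = of_nat (descent_count I n))"

end

theory Submission
  imports Defs "HOL-Combinatorics.Permutations"
begin

text \<open>A permutation of \<open>{1..n}\<close> whose only possible descent is at \<open>m\<close> is increasing on
  \<open>{1..m}\<close> and on \<open>{m+1..n}\<close>, hence determined by the \<open>m\<close>-set \<open>\<sigma> ` {1..m}\<close>, and every
  \<open>m\<close>-set arises. So there are \<open>n choose m\<close> of them, and discarding the identity gives
  \<open>d({m};z) = (z gchoose m) - 1\<close>. At a root \<open>z\<close> therefore \<open>\<Prod>i<m. |z - i| = m!\<close>. But if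
  \<open>|z| > m\<close> then \<open>|z - i| > m - i\<close>, and if \<open>Re z < -1\<close> then \<open>|z - i| > i + 1\<close>; in both cases
  the product exceeds \<open>m!\<close>.\<close>

lemma map_upt_eq_sorted_list_of_set:
  fixes \<sigma> :: "nat \<Rightarrow> 'a::linorder"
  assumes "\<And>j. a \<le> j \<Longrightarrow> Suc j < b \<Longrightarrow> \<sigma> j < \<sigma> (Suc j)"
  shows "map \<sigma> [a..<b] = sorted_list_of_set (\<sigma> ` {a..<b})"
proof -
  have "sorted_wrt (<) (map \<sigma> [a..<b])"
    using assms by (auto simp: sorted_wrt_iff_nth_Suc_transp)
  then show ?thesis
    by (intro strict_sorted_equal) auto
qed

definition list_perm :: "nat \<Rightarrow> nat list \<Rightarrow> nat \<Rightarrow> nat" where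
  "list_perm n xs j = (if j \<in> {1..n} then xs ! (j - 1) else j)"

lemma list_perm_map_upt:
  assumes "\<sigma> permutes {1..n}"
  shows "list_perm n (map \<sigma> [1..<Suc n]) = \<sigma>"
proof
  fix j
  show "list_perm n (map \<sigma> [1..<Suc n]) j = \<sigma> j"
    using permutes_not_in[OF assms, of j] by (auto simp: list_perm_def simp del: upt_Suc)
qed

lemma list_perm_image_atLeastAtMost:
  assumes "length xs = n" "k \<le> n"
  shows "list_perm n xs ` {1..k} = set (take k xs)"
proof -
  have "list_perm n xs (Suc i) = xs ! i" if "i < k" for i
    using that assms by (simp add: list_perm_def)
  then have "list_perm n xs ` Suc ` {0..<k} = nth xs ` {0..<k}"
    by (simp only: image_image) (simp add: image_def)
  then show ?thesis
    using assms by (simp add: nth_image atLeastLessThanSuc_atLeastAtMost)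
qed

lemma list_perm_permutes:
  assumes "distinct xs" "set xs = {1..n}"
  shows "list_perm n xs permutes {1..n}"
proof -
  have len: "length xs = n"
    using distinct_card[OF assms(1)] assms(2) by simp
  have "list_perm n xs ` {1..n} = set xs"
    using list_perm_image_atLeastAtMost[OF len, of n] len by simp
  moreover have "inj_on (list_perm n xs) {1..n}"
    using assms(1) len by (force simp: inj_on_def list_perm_def nth_eq_iff_index_eq)
  ultimately show ?thesis
    using assms(2) by (intro bij_imp_permutes) (auto simp: bij_betw_def list_perm_def)
qed

lemma descent_set_list_perm:
  assumes "length xs = n"
  shows "descent_set n (list_perm n xs) = {j. 1 \<le> j \<and> j < n \<and> xs ! j < xs ! (j - 1)}"
  using assms by (auto simp: descent_set_def list_perm_def)

lemma descent_of_sorted_append: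
  fixes xs ys :: "'a::linorder list"
  assumes "sorted_wrt (<) xs" "sorted_wrt (<) ys"
    and "Suc i < length (xs @ ys)" "(xs @ ys) ! Suc i < (xs @ ys) ! i"
  shows "Suc i = length xs"
proof (rule ccontr)
  assume "Suc i \<noteq> length xs"
  then consider "Suc i < length xs" | "length xs < Suc i" by linarith
  then show False
  proof cases
    case 1
    then show False
      using assms(1,4) sorted_wrt_nth_less[OF assms(1), of i "Suc i"] by (simp add: nth_append)
  next
    case 2
    define k where "k = i - length xs"
    have i: "i = length xs + k" and k: "Suc k < length ys"
      using 2 assms(3) by (auto simp: k_def)
    have "ys ! k < ys ! Suc k"
      using sorted_wrt_nth_less[OF assms(2) lessI k] .
    then show False
      using assms(4) by (simp add: i nth_append)
  qed
qed

text \<open>One-line notation of the permutation with descent set inside \<open>{card S}\<close> that maps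
  \<open>{1..card S}\<close> onto \<open>S\<close>.\<close>

definition grassmannian_word :: "nat \<Rightarrow> nat set \<Rightarrow> nat list" where
  "grassmannian_word n S = sorted_list_of_set S @ sorted_list_of_set ({1..n} - S)"

lemma
  assumes "S \<subseteq> {1..n}"
  shows distinct_grassmannian_word: "distinct (grassmannian_word n S)"
    and set_grassmannian_word: "set (grassmannian_word n S) = {1..n}"
    and length_grassmannian_word: "length (grassmannian_word n S) = n"
proof -
  have "finite S"
    using assms finite_subset by blast
  then show "distinct (grassmannian_word n S)" "set (grassmannian_word n S) = {1..n}"
    using assms by (auto simp: grassmannian_word_def)
  then show "length (grassmannian_word n S) = n"
    using distinct_card by fastforce
qed

lemma descent_set_grassmannian_perm:
  assumes "S \<subseteq> {1..n}"
  shows "descent_set n (list_perm n (grassmannian_word n S)) \<subseteq> {card S}"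
proof
  fix j
  assume "j \<in> descent_set n (list_perm n (grassmannian_word n S))"
  then have "1 \<le> j" "j < n" and desc: "grassmannian_word n S ! j < grassmannian_word n S ! (j - 1)"
    by (auto simp: descent_set_list_perm length_grassmannian_word[OF assms])
  have "Suc (j - 1) = length (sorted_list_of_set S)"
    by (rule descent_of_sorted_append[of _ "sorted_list_of_set ({1..n} - S)"])
      (use \<open>1 \<le> j\<close> \<open>j < n\<close> desc length_grassmannian_word[OF assms] in
        \<open>auto simp: grassmannian_word_def\<close>)
  then show "j \<in> {card S}"
    using \<open>1 \<le> j\<close> by simp
qed

lemma grassmannian_perm_image:
  assumes "S \<subseteq> {1..n}"
  shows "list_perm n (grassmannian_word n S) ` {1..card S} = S"
proof -
  have "finite S"
    using assms finite_subset by blast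
  moreover have "card S \<le> n"
    using card_mono[OF _ assms] by simp
  ultimately have "set (take (card S) (grassmannian_word n S)) = S"
    by (simp add: grassmannian_word_def)
  then show ?thesis
    using list_perm_image_atLeastAtMost[OF length_grassmannian_word[OF assms] \<open>card S \<le> n\<close>]
    by simp
qed

lemma less_Suc_if_not_descent:
  assumes "\<sigma> permutes {1..n}" "1 \<le> j" "j < n" "j \<notin> descent_set n \<sigma>"
  shows "\<sigma> j < \<sigma> (Suc j)"
proof -
  have "\<sigma> j \<noteq> \<sigma> (Suc j)"
    using permutes_inj[OF assms(1)] by (metis injD n_not_Suc_n)
  then show ?thesis
    using assms(2-4) by (auto simp: descent_set_def)
qed

lemma map_upt_if_descent_set_subset:
  assumes perm: "\<sigma> permutes {1..n}" and desc: "descent_set n \<sigma> \<subseteq> {m}" and "m \<le> n"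
  shows "map \<sigma> [1..<Suc n] = grassmannian_word n (\<sigma> ` {1..m})"
proof -
  have sorted_block: "map \<sigma> [a..<b] = sorted_list_of_set (\<sigma> ` {a..<b})"
    if "m \<notin> {a..<b - 1}" "1 \<le> a" "b \<le> Suc n" for a b
    by (rule map_upt_eq_sorted_list_of_set, rule less_Suc_if_not_descent[OF perm])
      (use that desc in auto)
  have "\<sigma> ` {Suc m..<Suc n} = \<sigma> ` ({1..n} - {1..m})"
    by (rule arg_cong[where f = "image \<sigma>"]) auto
  also have "\<dots> = {1..n} - \<sigma> ` {1..m}"
    using permutes_inj[OF perm] permutes_image[OF perm] by (simp add: image_set_diff)
  finally have second_block: "\<sigma> ` {Suc m..<Suc n} = {1..n} - \<sigma> ` {1..m}" .
  have "[1..<Suc n] = [1..<Suc m] @ [Suc m..<Suc n]"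
    using \<open>m \<le> n\<close> upt_add_eq_append[of 1 "Suc m" "n - m"] by (simp del: upt_Suc)
  then show ?thesis
    using sorted_block[of 1 "Suc m"] sorted_block[of "Suc m" "Suc n"] second_block \<open>m \<le> n\<close>
    by (simp add: grassmannian_word_def atLeastLessThanSuc_atLeastAtMost del: upt_Suc)
qed

lemma descent_set_eq_empty_iff:
  assumes "\<sigma> permutes {1..n}"
  shows "descent_set n \<sigma> = {} \<longleftrightarrow> \<sigma> = id"
proof
  assume "descent_set n \<sigma> = {}"
  then have "map \<sigma> [1..<Suc n] = map id [1..<Suc n]"
    using map_upt_if_descent_set_subset[OF assms, of 0]
    by (simp add: grassmannian_word_def atLeastLessThanSuc_atLeastAtMost[symmetric] del: upt_Suc)
  then show "\<sigma> = id"
    using list_perm_map_upt[OF assms] list_perm_map_upt[OF permutes_id] by metis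
qed (simp add: descent_set_def)

lemma bij_betw_image_descent_set_subset:
  assumes "m \<le> n"
  shows "bij_betw (\<lambda>\<sigma>. \<sigma> ` {1..m})
           {\<sigma>. \<sigma> permutes {1..n} \<and> descent_set n \<sigma> \<subseteq> {m}} {S. S \<subseteq> {1..n} \<and> card S = m}"
proof (rule bij_betwI[where g = "\<lambda>S. list_perm n (grassmannian_word n S)"])
  show "(\<lambda>\<sigma>. \<sigma> ` {1..m}) \<in> {\<sigma>. \<sigma> permutes {1..n} \<and> descent_set n \<sigma> \<subseteq> {m}} \<rightarrow>
          {S. S \<subseteq> {1..n} \<and> card S = m}"
  proof
    fix \<sigma> assume "\<sigma> \<in> {\<sigma>. \<sigma> permutes {1..n} \<and> descent_set n \<sigma> \<subseteq> {m}}"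
    then have perm: "\<sigma> permutes {1..n}" by simp
    have "\<sigma> ` {1..m} \<subseteq> {1..n}"
      using assms permutes_image[OF perm] by auto
    moreover have "card (\<sigma> ` {1..m}) = m"
      using card_image[OF inj_on_subset[OF permutes_inj[OF perm] subset_UNIV]] by simp
    ultimately show "\<sigma> ` {1..m} \<in> {S. S \<subseteq> {1..n} \<and> card S = m}" by simp
  qed
  show "(\<lambda>S. list_perm n (grassmannian_word n S)) \<in> {S. S \<subseteq> {1..n} \<and> card S = m} \<rightarrow>
          {\<sigma>. \<sigma> permutes {1..n} \<and> descent_set n \<sigma> \<subseteq> {m}}"
    using list_perm_permutes[OF distinct_grassmannian_word set_grassmannian_word]
      descent_set_grassmannian_perm by blast
  show "list_perm n (grassmannian_word n (\<sigma> ` {1..m})) = \<sigma>"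
    if "\<sigma> \<in> {\<sigma>. \<sigma> permutes {1..n} \<and> descent_set n \<sigma> \<subseteq> {m}}" for \<sigma>
    using that assms map_upt_if_descent_set_subset list_perm_map_upt by fastforce
  show "list_perm n (grassmannian_word n S) ` {1..m} = S"
    if "S \<in> {S. S \<subseteq> {1..n} \<and> card S = m}" for S
    using that grassmannian_perm_image by auto
qed

lemma descent_count_singleton:
  assumes "1 \<le> m" "m < n"
  shows "descent_count {m} n = (n choose m) - 1"
proof -
  let ?D = "{\<sigma>. \<sigma> permutes {1..n} \<and> descent_set n \<sigma> \<subseteq> {m}}"
  have "card ?D = n choose m"
    using bij_betw_same_card[OF bij_betw_image_descent_set_subset] assms
    by (simp add: n_subsets)
  moreover have "{\<sigma>. \<sigma> permutes {1..n} \<and> descent_set n \<sigma> = {m}} = ?D - {id}"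
    using descent_set_eq_empty_iff by (auto simp: subset_singleton_iff)
  moreover have "id \<in> ?D"
    by (simp add: permutes_id descent_set_def)
  ultimately show ?thesis
    by (simp add: descent_count_def card_Diff_singleton)
qed

definition gbinomial_poly :: "nat \<Rightarrow> 'a::field_char_0 poly" where
  "gbinomial_poly k = smult (inverse (fact k)) (\<Prod>i<k. [:- of_nat i, 1:])"

lemma poly_gbinomial_poly: "poly (gbinomial_poly k) x = x gchoose k"
  by (simp add: gbinomial_poly_def poly_prod gbinomial_prod_rev atLeast0LessThan
      divide_inverse mult.commute)

lemma poly_eq_if_eventually_of_nat:
  fixes p q :: "'a::{idom, ring_char_0} poly"
  assumes "\<And>n. n > N \<Longrightarrow> poly p (of_nat n) = poly q (of_nat n)"
  shows "p = q"
proof (rule ccontr)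
  assume "p \<noteq> q"
  then have "finite {x. poly (p - q) x = 0}"
    by (intro poly_roots_finite) simp
  moreover have "of_nat ` {Suc N..} \<subseteq> {x. poly (p - q) x = 0}"
    using assms by auto
  ultimately have "finite (of_nat ` {Suc N..} :: 'a set)"
    by (rule finite_subset[rotated])
  then have "finite {Suc N..}"
    by (rule finite_imageD) (simp add: inj_on_def)
  then show False
    using infinite_Ici by blast
qed

lemma descent_poly_eqI:
  assumes "\<And>n. n > Max (I \<union> {0}) \<Longrightarrow> poly p (of_nat n) = of_nat (descent_count I n)"
  shows "descent_poly I = p"
  unfolding descent_poly_def
proof (rule the_equality)
  fix q :: "complex poly"
  assume "\<forall>n>Max (I \<union> {0}). poly q (of_nat n) = of_nat (descent_count I n)"
  with assms show "q = p"
    by (intro poly_eq_if_eventually_of_nat[of "Max (I \<union> {0})"]) simp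
qed (use assms in simp)

lemma poly_descent_poly_singleton:
  assumes "1 \<le> m"
  shows "poly (descent_poly {m}) z = (z gchoose m) - 1"
proof -
  have "descent_poly {m} = gbinomial_poly m - 1"
  proof (rule descent_poly_eqI)
    fix n :: nat
    assume "n > Max ({m} \<union> {0})"
    then have "m < n" by simp
    then have "1 \<le> n choose m"
      by (simp add: Suc_le_eq)
    then show "poly (gbinomial_poly m - 1) (of_nat n) = of_nat (descent_count {m} n)"
      using descent_count_singleton[OF assms \<open>m < n\<close>]
      by (simp add: poly_gbinomial_poly binomial_gbinomial)
  qed
  then show ?thesis
    by (simp add: poly_gbinomial_poly)
qed

lemma norm_gchoose:
  fixes z :: "'a::{real_normed_field, field_char_0}"
  shows "norm (z gchoose k) = (\<Prod>i<k. norm (z - of_nat i)) / fact k"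
  by (simp add: gbinomial_prod_rev atLeast0LessThan norm_divide prod_norm)

lemma prod_lessThan_strict_mono:
  fixes f g :: "nat \<Rightarrow> 'a::linordered_idom"
  assumes "k \<ge> 1" "\<And>i. i < k \<Longrightarrow> 0 \<le> f i \<and> f i < g i"
  shows "(\<Prod>i<k. f i) < (\<Prod>i<k. g i)"
  using assms by (intro prod_mono_strict[of 0]) (auto intro: less_imp_le le_less_trans)

lemma one_less_norm_gchoose_if_norm_gt:
  fixes z :: "'a::{real_normed_field, field_char_0}"
  assumes "k \<ge> 1" "norm z > real k"
  shows "1 < norm (z gchoose k)"
proof -
  have bound: "real (k - i) < norm (z - of_nat i)" if "i < k" for i
    using that assms(2) norm_triangle_ineq2[of z "of_nat i"] by (simp add: of_nat_diff)
  have "(fact k :: real) = (\<Prod>i<k. real (k - i))"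
    by (simp add: fact_prod_rev atLeast0LessThan)
  also have "\<dots> < (\<Prod>i<k. norm (z - of_nat i))"
    using assms(1) bound by (intro prod_lessThan_strict_mono) auto
  finally show ?thesis
    by (simp add: norm_gchoose)
qed

lemma one_less_norm_gchoose_if_Re_lt:
  fixes z :: complex
  assumes "k \<ge> 1" "Re z < -1"
  shows "1 < norm (z gchoose k)"
proof -
  have bound: "real (Suc i) < norm (z - of_nat i)" for i
    using assms(2) abs_Re_le_cmod[of "z - of_nat i"] by simp
  have "(fact k :: real) = (\<Prod>i<k. real (Suc i))"
    by (simp add: fact_prod_Suc atLeast0LessThan)
  also have "\<dots> < (\<Prod>i<k. norm (z - of_nat i))"
    using assms(1) bound by (intro prod_lessThan_strict_mono) auto
  finally show ?thesis
    by (simp add: norm_gchoose)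
qed

theorem theorem4p4:
  fixes m :: nat and z0 :: complex
  assumes "m \<ge> 1"
    and "poly (descent_poly {m}) z0 = 0"
  shows "cmod z0 \<le> of_nat m \<and> Re z0 \<ge> -1"
proof -
  have "norm (z0 gchoose m) = 1"
    using assms by (simp add: poly_descent_poly_singleton)
  then show ?thesis
    using one_less_norm_gchoose_if_norm_gt[OF assms(1), of z0]
      one_less_norm_gchoose_if_Re_lt[OF assms(1), of z0]
    by linarith
qed

end
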